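(* Let $n\ge 1$, let $m_1,\dots,m_n$ and $x_1,\dots,x_n$ be real coordinates on the phase space with $x_1,\dots,x_n$ pairwise distinct, and equip functions of $(x,m)$ with the Poisson bracket determined by $$\{x_i,x_k\}=\operatorname{sgn}(x_i-x_k),\qquad \{m_i,m_k\}=\{m_i,x_k\}=0 .$$ Let $$h=\sum_{i,k=1}^n m_i m_k e^{-|x_i-x_k|}.$$ Then the Hamiltonian equations $\dot x_j=\{x_j,h\}$, $\dot m_j=\{m_j,h\}$ are exactly the system $$\dot m_j=0,\qquad \dot x_j=2\sum_{\substack{1\le k\le n\\ k\neq j}} m_j m_k e^{-|x_j-x_k|}+\sum_{k\neq j,\ i\neq j} m_i m_k\bigl(1-\operatorname{sgn}(x_j-x_k)\operatorname{sgn}(x_j-x_i)\bigr)e^{-|x_j-x_k|-|x_j-x_i|},\qquad 1\le j\le n,$$ (the second sum running over all pairs $(i,k)$ with $i\neq j$, $k\neq j$), i.e. the equations of motion of $n$ conservative peakons of the modified Camassa–Holm equation. Moreover, with $u(x)=\sum_{j=1}^n m_j e^{-|x-x_j|}$ and $m=u-u_{xx}=2\sum_{j=1}^n m_j\delta_{x_j}$, one has $h=\tfrac12\int u\,m\,d\xi=\tfrac12\|u\|_{H^1}^2$.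
   Context: The system arises from the modified Camassa–Holm equation $m_t+((u^2-u_x^2)m)_x=0$, $m=u-u_{xx}$, with the peakon Ansatz $u=\sum_j m_j(t)e^{-|x-x_j(t)|}$ and the rule that $u_x^2 m$ is defined by multiplying the Dirac mass at each $x_j$ by the arithmetic average of the left and right limits of $u_x^2$ at $x_j$; this gives $\dot m_j=0$, $\dot x_j=u(x_j)^2-\langle u_x^2\rangle(x_j)$, which is the displayed system. Here $\|u\|_{H^1}^2=\int(u^2+u_x^2)\,dx$. *)

theory Defs
  imports "HOL-Analysis.Analysis"
begin

text \<open>Phase space: positions x and amplitudes m, both in real^'n, where the finite
  index type 'n plays the role of {1..n} (n = CARD('n) \<ge> 1).\<close>

definition dX :: "(real^'n \<Rightarrow> real^'n \<Rightarrow> real) \<Rightarrow> 'n \<Rightarrow> real^'n \<Rightarrow> real^'n \<Rightarrow> real" where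
  "dX F i x m = deriv (\<lambda>t. F (x + t *\<^sub>R axis i 1) m) 0"

definition dM :: "(real^'n \<Rightarrow> real^'n \<Rightarrow> real) \<Rightarrow> 'n \<Rightarrow> real^'n \<Rightarrow> real^'n \<Rightarrow> real" where
  "dM F i x m = deriv (\<lambda>t. F x (m + t *\<^sub>R axis i 1)) 0"

text \<open>Poisson bracket determined by the coordinate brackets
  {x_i,x_k} = sgn(x_i - x_k), {x_i,m_k} = {m_i,x_k} = {m_i,m_k} = 0,
  extended as a biderivation: {F,G} = sum over coordinates a,b of dF/dz_a dG/dz_b {z_a,z_b}.\<close>

definition pbracket :: "(real^'n \<Rightarrow> real^'n \<Rightarrow> real) \<Rightarrow> (real^'n \<Rightarrow> real^'n \<Rightarrow> real)
    \<Rightarrow> real^'n \<Rightarrow> real^'n \<Rightarrow> real" where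
  "pbracket F G x m =
     (\<Sum>i\<in>UNIV. \<Sum>k\<in>UNIV.
          dX F i x m * dX G k x m * sgn (x$i - x$k)
        + dX F i x m * dM G k x m * 0
        + dM F i x m * dX G k x m * 0
        + dM F i x m * dM G k x m * 0)"

definition ham :: "real^'n \<Rightarrow> real^'n \<Rightarrow> real" where
  "ham x m = (\<Sum>i\<in>UNIV. \<Sum>k\<in>UNIV. m$i * m$k * exp (- \<bar>x$i - x$k\<bar>))"

definition peakon_u :: "real^'n \<Rightarrow> real^'n \<Rightarrow> real \<Rightarrow> real" where
  "peakon_u x m \<xi> = (\<Sum>j\<in>UNIV. m$j * exp (- \<bar>\<xi> - x$j\<bar>))"

text \<open>Pairing \<integral> u dm of a continuous function u with the measure m = 2 \<Sum> m_j \<delta>_{x_j}.\<close>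
definition pair_with_m :: "real^'n \<Rightarrow> real^'n \<Rightarrow> (real \<Rightarrow> real) \<Rightarrow> real" where
  "pair_with_m x m f = (\<Sum>j\<in>UNIV. 2 * m$j * f (x$j))"

definition mCH_rhs :: "real^'n \<Rightarrow> real^'n \<Rightarrow> 'n \<Rightarrow> real" where
  "mCH_rhs x m j =
     2 * (\<Sum>k\<in>UNIV - {j}. m$j * m$k * exp (- \<bar>x$j - x$k\<bar>))
   + (\<Sum>i\<in>UNIV - {j}. \<Sum>k\<in>UNIV - {j}.
        m$i * m$k * (1 - sgn (x$j - x$k) * sgn (x$j - x$i))
          * exp (- \<bar>x$j - x$k\<bar> - \<bar>x$j - x$i\<bar>))"

end

theory Submission
  imports Defs
begin

text \<open>Distinctness of the \<open>x\<^sub>i\<close> makes \<open>h\<close> differentiable in the positions, with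
  \<open>\<partial>h/\<partial>x\<^sub>k = -2 \<Sum>\<^sub>l m\<^sub>k m\<^sub>l sgn(x\<^sub>k - x\<^sub>l) exp(-|x\<^sub>k - x\<^sub>l|)\<close>.
  Contracting with \<open>sgn(x\<^sub>j - x\<^sub>k)\<close> splits off the terms with \<open>l = j\<close>; the remaining
  double sum over \<open>k, l \<noteq> j\<close> is symmetrised, and each symmetric pair collapses by a
  three-point identity between \<open>sgn\<close> and \<open>exp(-|\<cdot>|)\<close>.
  The kernel \<open>exp(-|\<xi> - a|)\<close> is twice the fundamental solution of \<open>1 - \<partial>\<^sup>2\<close>: integrating
  by parts on each side of \<open>a\<close> against a compactly supported \<open>\<phi>\<close> gives \<open>2\<phi>(a)\<close>,
  i.e. \<open>u - u\<^sub>x\<^sub>x = 2 \<Sum> m\<^sub>j \<delta>\<^bsub>x\<^sub>j\<^esub>\<close>. For the \<open>H\<^sup>1\<close> norm, the products of two peaks and of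
  their derivatives integrate explicitly to \<open>2 exp(-|a - b|)\<close>.\<close>

lemma has_real_derivative_exp_neg_abs:
  fixes a \<xi> :: real
  assumes "\<xi> \<noteq> a"
  shows "((\<lambda>t. exp (- \<bar>t - a\<bar>)) has_real_derivative - sgn (\<xi> - a) * exp (- \<bar>\<xi> - a\<bar>)) (at \<xi>)"
proof (cases "a < \<xi>")
  case True
  have "((\<lambda>t. exp (a - t)) has_real_derivative - sgn (\<xi> - a) * exp (- \<bar>\<xi> - a\<bar>)) (at \<xi>)"
    using True by (auto intro!: derivative_eq_intros)
  then show ?thesis
    by (rule has_field_derivative_transform_within_open[of _ _ _ "{a<..}"]) (use True in auto)
next
  case False
  with assms have "\<xi> < a" by simp
  have "((\<lambda>t. exp (t - a)) has_real_derivative - sgn (\<xi> - a) * exp (- \<bar>\<xi> - a\<bar>)) (at \<xi>)"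
    using \<open>\<xi> < a\<close> by (auto intro!: derivative_eq_intros)
  then show ?thesis
    by (rule has_field_derivative_transform_within_open[of _ _ _ "{..<a}"]) (use \<open>\<xi> < a\<close> in auto)
qed

lemma has_real_derivative_exp_neg_abs_affine:
  fixes d c :: real
  assumes "d \<noteq> 0 \<or> c = 0"
  shows "((\<lambda>t. exp (- \<bar>d + c * t\<bar>)) has_real_derivative - c * sgn d * exp (- \<bar>d\<bar>)) (at 0)"
proof (cases "c = 0")
  case False
  with assms have "d \<noteq> 0" by simp
  have "((\<lambda>t. exp (- \<bar>(d + c * t) - 0\<bar>)) has_real_derivative
      - sgn ((d + c * 0) - 0) * exp (- \<bar>(d + c * 0) - 0\<bar>) * c) (at 0)"
    by (rule DERIV_chain2[OF has_real_derivative_exp_neg_abs])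
      (use \<open>d \<noteq> 0\<close> in \<open>auto intro!: derivative_eq_intros\<close>)
  then show ?thesis by (simp add: algebra_simps)
qed simp

lemma dX_ham:
  fixes x m :: "real^'n"
  assumes distinct: "inj (\<lambda>i. x$i)"
  shows "dX ham k x m = -2 * (\<Sum>l\<in>UNIV. m$k * m$l * sgn (x$k - x$l) * exp (- \<bar>x$k - x$l\<bar>))"
proof -
  define c where "c i l = (if i = k then 1 else 0) - (if l = k then 1 else 0 :: real)" for i l
  define f where "f i l = m$i * m$l * sgn (x$i - x$l) * exp (- \<bar>x$i - x$l\<bar>)" for i l
  have shift: "ham (x + t *\<^sub>R axis k 1) m = (\<Sum>i\<in>UNIV. \<Sum>l\<in>UNIV. m$i * m$l * exp (- \<bar>(x$i - x$l) + c i l * t\<bar>))" for t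
    unfolding ham_def c_def by (intro sum.cong refl) (auto simp: axis_def algebra_simps)
  have "x$i - x$l \<noteq> 0 \<or> c i l = 0" for i l
    using distinct by (cases "i = l") (auto simp: c_def dest: injD)
  then have "((\<lambda>t. ham (x + t *\<^sub>R axis k 1) m) has_real_derivative
      (\<Sum>i\<in>UNIV. \<Sum>l\<in>UNIV. m$i * m$l * (- c i l * sgn (x$i - x$l) * exp (- \<bar>x$i - x$l\<bar>)))) (at 0)"
    unfolding shift by (intro DERIV_sum DERIV_cmult has_real_derivative_exp_neg_abs_affine)
  then have "dX ham k x m = (\<Sum>i\<in>UNIV. \<Sum>l\<in>UNIV. m$i * m$l * (- c i l * sgn (x$i - x$l) * exp (- \<bar>x$i - x$l\<bar>)))"
    unfolding dX_def by (rule DERIV_imp_deriv)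
  also have "\<dots> = (\<Sum>i\<in>UNIV. \<Sum>l\<in>UNIV. (if l = k then f i l else 0) - (if i = k then f i l else 0))"
    by (intro sum.cong refl) (auto simp: c_def f_def)
  also have "\<dots> = (\<Sum>i\<in>UNIV. \<Sum>l\<in>UNIV. if l = k then f i l else 0) - (\<Sum>i\<in>UNIV. \<Sum>l\<in>UNIV. if i = k then f i l else 0)"
    by (simp only: sum_subtractf)
  also have "(\<Sum>i\<in>UNIV. \<Sum>l\<in>UNIV. if i = k then f i l else 0) = (\<Sum>l\<in>UNIV. f k l)"
    by (subst sum.swap) (simp add: sum.delta')
  also have "(\<Sum>i\<in>UNIV. \<Sum>l\<in>UNIV. if l = k then f i l else 0) = (\<Sum>i\<in>UNIV. f i k)"
    by (simp add: sum.delta')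
  also have "(\<Sum>i\<in>UNIV. f i k) = - (\<Sum>l\<in>UNIV. f k l)"
  proof -
    have "f i k = - f k i" for i
      using sgn_minus[of "x$k - x$i"] by (simp add: f_def abs_minus_commute)
    then show ?thesis by (simp add: sum_negf)
  qed
  finally show ?thesis by (simp add: f_def)
qed

lemma pbracket_position:
  fixes x m :: "real^'n"
  shows "pbracket (\<lambda>x m. x$j) F x m = (\<Sum>k\<in>UNIV. sgn (x$j - x$k) * dX F k x m)"
proof -
  have "dX (\<lambda>x m. x$j) i x m = (if i = j then 1 else 0)" for i
  proof -
    have "(\<lambda>t. (x + t *\<^sub>R axis i 1)$j) = (\<lambda>t. x$j + t * (if i = j then 1 else 0))"
      by (auto simp: axis_def fun_eq_iff)
    then show ?thesis
      unfolding dX_def by (auto intro!: DERIV_imp_deriv derivative_eq_intros)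
  qed
  then have "pbracket (\<lambda>x m. x$j) F x m
      = (\<Sum>i\<in>UNIV. if i = j then (\<Sum>k\<in>UNIV. sgn (x$i - x$k) * dX F k x m) else 0)"
    unfolding pbracket_def by (intro sum.cong refl) (auto simp: mult.commute)
  then show ?thesis by simp
qed

lemma pbracket_amplitude:
  fixes x m :: "real^'n"
  shows "pbracket (\<lambda>x m. m$j) F x m = 0"
  unfolding pbracket_def dX_def by simp

lemma sum_sum_symmetrize:
  fixes f :: "'a \<Rightarrow> 'a \<Rightarrow> 'b::comm_ring_1"
  shows "2 * (\<Sum>k\<in>A. \<Sum>l\<in>A. f k l) = (\<Sum>k\<in>A. \<Sum>l\<in>A. f k l + f l k)"
proof -
  have "(\<Sum>k\<in>A. \<Sum>l\<in>A. f k l + f l k) = (\<Sum>k\<in>A. \<Sum>l\<in>A. f k l) + (\<Sum>k\<in>A. \<Sum>l\<in>A. f l k)"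
    by (simp only: sum.distrib)
  also have "(\<Sum>k\<in>A. \<Sum>l\<in>A. f l k) = (\<Sum>k\<in>A. \<Sum>l\<in>A. f k l)"
    by (rule sum.swap)
  finally show ?thesis by (simp only: mult_2)
qed

lemma sgn_exp_neg_abs_triangle:
  fixes a b c :: real
  assumes "b \<noteq> a" "c \<noteq> a"
  shows "- sgn (a - b) * sgn (b - c) * exp (- \<bar>b - c\<bar>) - sgn (a - c) * sgn (c - b) * exp (- \<bar>c - b\<bar>)
     = (1 - sgn (a - b) * sgn (a - c)) * exp (- \<bar>a - b\<bar> - \<bar>a - c\<bar>)"
proof -
  have swap: "sgn (c - b) = - sgn (b - c)" "\<bar>c - b\<bar> = \<bar>b - c\<bar>"
    using sgn_minus[of "b - c"] by simp_all
  consider "b < a" "c < a" | "a < b" "a < c" | "b < a" "a < c" | "a < b" "c < a"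
    using assms by linarith
  then show ?thesis
  proof cases
    case 1
    then show ?thesis by (simp add: swap)
  next
    case 2
    then show ?thesis by (simp add: swap)
  next
    case 3
    then have "\<bar>b - c\<bar> = \<bar>a - b\<bar> + \<bar>a - c\<bar>" "sgn (b - c) = -1" by simp_all
    with 3 show ?thesis by (simp add: swap)
  next
    case 4
    then have "\<bar>b - c\<bar> = \<bar>a - b\<bar> + \<bar>a - c\<bar>" "sgn (b - c) = 1" by simp_all
    with 4 show ?thesis by (simp add: swap)
  qed
qed

lemma sum_sgn_mul_ham_gradient_eq_mCH_rhs:
  fixes x m :: "real^'n"
  assumes distinct: "inj (\<lambda>i. x$i)"
  shows "(\<Sum>k\<in>UNIV. sgn (x$j - x$k) * (-2 * (\<Sum>l\<in>UNIV. m$k * m$l * sgn (x$k - x$l) * exp (- \<bar>x$k - x$l\<bar>))))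
    = mCH_rhs x m j"
proof -
  define T where "T k l = -2 * (sgn (x$j - x$k) * sgn (x$k - x$l)) * (m$k * m$l * exp (- \<bar>x$k - x$l\<bar>))" for k l
  define S where "S i k = m$i * m$k * (1 - sgn (x$j - x$k) * sgn (x$j - x$i)) * exp (- \<bar>x$j - x$k\<bar> - \<bar>x$j - x$i\<bar>)" for i k
  let ?J = "UNIV - {j}"
  have ne: "x$k \<noteq> x$j" if "k \<in> ?J" for k using distinct that by (auto dest: injD)
  have "(\<Sum>k\<in>UNIV. sgn (x$j - x$k) * (-2 * (\<Sum>l\<in>UNIV. m$k * m$l * sgn (x$k - x$l) * exp (- \<bar>x$k - x$l\<bar>))))
     = (\<Sum>k\<in>UNIV. \<Sum>l\<in>UNIV. T k l)"
    unfolding T_def sum_distrib_left by (intro sum.cong refl) (simp only: mult_ac)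
  also have "\<dots> = (\<Sum>k\<in>?J. \<Sum>l\<in>UNIV. T k l)"
    by (subst sum.remove[of UNIV j]) (auto simp: T_def)
  also have "\<dots> = (\<Sum>k\<in>?J. T k j) + (\<Sum>k\<in>?J. \<Sum>l\<in>?J. T k l)"
    by (simp add: sum.remove[of UNIV j] sum.distrib)
  also have "(\<Sum>k\<in>?J. T k j) = 2 * (\<Sum>k\<in>?J. m$j * m$k * exp (- \<bar>x$j - x$k\<bar>))"
  proof -
    have "sgn (x$j - x$k) * sgn (x$k - x$j) = -1" if "k \<in> ?J" for k
      using ne[OF that] by (auto simp: sgn_if)
    then show ?thesis
      unfolding sum_distrib_left by (intro sum.cong refl) (simp add: T_def abs_minus_commute)
  qed
  also have "(\<Sum>k\<in>?J. \<Sum>l\<in>?J. T k l) = (\<Sum>i\<in>?J. \<Sum>k\<in>?J. S i k)"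
  proof -
    have TS: "T k l + T l k = 2 * S l k" if "k \<in> ?J" "l \<in> ?J" for k l
      using sgn_exp_neg_abs_triangle[OF ne[OF that(1)] ne[OF that(2)]]
      unfolding T_def S_def by (simp add: algebra_simps)
    have "2 * (\<Sum>k\<in>?J. \<Sum>l\<in>?J. T k l) = (\<Sum>k\<in>?J. \<Sum>l\<in>?J. T k l + T l k)"
      by (rule sum_sum_symmetrize)
    also have "\<dots> = 2 * (\<Sum>k\<in>?J. \<Sum>l\<in>?J. S l k)"
      unfolding sum_distrib_left by (intro sum.cong refl) (simp add: TS)
    also have "(\<Sum>k\<in>?J. \<Sum>l\<in>?J. S l k) = (\<Sum>i\<in>?J. \<Sum>k\<in>?J. S i k)"
      by (rule sum.swap)
    finally show ?thesis by simp
  qed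
  finally show ?thesis unfolding mCH_rhs_def S_def .
qed

lemma pbracket_position_ham:
  fixes x m :: "real^'n"
  assumes distinct: "inj (\<lambda>i. x$i)"
  shows "pbracket (\<lambda>x m. x$j) ham x m = mCH_rhs x m j"
  unfolding pbracket_position dX_ham[OF distinct] by (rule sum_sgn_mul_ham_gradient_eq_mCH_rhs[OF distinct])

lemma has_real_derivative_vanishes_outside:
  fixes f f' :: "real \<Rightarrow> real"
  assumes deriv: "\<And>t. (f has_real_derivative f' t) (at t)"
    and zero: "\<And>t. B < \<bar>t\<bar> \<Longrightarrow> f t = 0"
    and "B < \<bar>\<xi>\<bar>"
  shows "f' \<xi> = 0"
proof -
  let ?S = "{B<..} \<union> {..<-B}"
  have "((\<lambda>_. 0) has_real_derivative 0) (at \<xi>)" by simp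
  then have "(f has_real_derivative 0) (at \<xi>)"
    by (rule has_field_derivative_transform_within_open[of _ _ _ ?S]) (use assms(3) zero in auto)
  then show ?thesis using deriv DERIV_unique by blast
qed

lemma has_integral_exp_neg_abs_Helmholtz_right:
  fixes \<phi> \<phi>' \<phi>'' :: "real \<Rightarrow> real"
  assumes d1: "\<And>t. (\<phi> has_real_derivative \<phi>' t) (at t)"
    and d2: "\<And>t. (\<phi>' has_real_derivative \<phi>'' t) (at t)"
    and "a \<le> R" "\<phi> R = 0" "\<phi>' R = 0"
  shows "((\<lambda>t. exp (- \<bar>t - a\<bar>) * (\<phi> t - \<phi>'' t)) has_integral \<phi> a + \<phi>' a) {a..R}"
proof -
  define F where "F t = - exp (a - t) * (\<phi> t + \<phi>' t)" for t
  have "(F has_real_derivative exp (- \<bar>t - a\<bar>) * (\<phi> t - \<phi>'' t)) (at t)" if "a \<le> t" for t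
  proof -
    have "(F has_real_derivative exp (a - t) * (\<phi> t + \<phi>' t) - exp (a - t) * (\<phi>' t + \<phi>'' t)) (at t)"
      unfolding F_def by (auto intro!: derivative_eq_intros d1 d2)
    then show ?thesis using that by (simp add: algebra_simps)
  qed
  then have "((\<lambda>t. exp (- \<bar>t - a\<bar>) * (\<phi> t - \<phi>'' t)) has_integral F R - F a) {a..R}"
    using \<open>a \<le> R\<close> by (intro fundamental_theorem_of_calculus)
      (auto simp: has_real_derivative_iff_has_vector_derivative intro: has_vector_derivative_at_within)
  then show ?thesis using assms(4,5) by (simp add: F_def add.commute)
qed

lemma has_integral_exp_neg_abs_Helmholtz_left:
  fixes \<phi> \<phi>' \<phi>'' :: "real \<Rightarrow> real"
  assumes d1: "\<And>t. (\<phi> has_real_derivative \<phi>' t) (at t)"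
    and d2: "\<And>t. (\<phi>' has_real_derivative \<phi>'' t) (at t)"
    and "L \<le> a" "\<phi> L = 0" "\<phi>' L = 0"
  shows "((\<lambda>t. exp (- \<bar>t - a\<bar>) * (\<phi> t - \<phi>'' t)) has_integral \<phi> a - \<phi>' a) {L..a}"
proof -
  define F where "F t = exp (t - a) * (\<phi> t - \<phi>' t)" for t
  have "(F has_real_derivative exp (- \<bar>t - a\<bar>) * (\<phi> t - \<phi>'' t)) (at t)" if "t \<le> a" for t
  proof -
    have "(F has_real_derivative exp (t - a) * (\<phi> t - \<phi>' t) + exp (t - a) * (\<phi>' t - \<phi>'' t)) (at t)"
      unfolding F_def by (auto intro!: derivative_eq_intros d1 d2)
    then show ?thesis using that by (simp add: algebra_simps)
  qed
  then have "((\<lambda>t. exp (- \<bar>t - a\<bar>) * (\<phi> t - \<phi>'' t)) has_integral F a - F L) {L..a}"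
    using \<open>L \<le> a\<close> by (intro fundamental_theorem_of_calculus)
      (auto simp: has_real_derivative_iff_has_vector_derivative intro: has_vector_derivative_at_within)
  then show ?thesis using assms(4,5) by (simp add: F_def)
qed

lemma has_integral_exp_neg_abs_Helmholtz:
  fixes \<phi> \<phi>' \<phi>'' :: "real \<Rightarrow> real"
  assumes d1: "\<And>t. (\<phi> has_real_derivative \<phi>' t) (at t)"
    and d2: "\<And>t. (\<phi>' has_real_derivative \<phi>'' t) (at t)"
    and supp: "bounded {t. \<phi> t \<noteq> 0}"
  shows "((\<lambda>t. exp (- \<bar>t - a\<bar>) * (\<phi> t - \<phi>'' t)) has_integral 2 * \<phi> a) UNIV"
proof -
  obtain B where "\<And>t. \<phi> t \<noteq> 0 \<Longrightarrow> \<bar>t\<bar> \<le> B"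
    using supp unfolding bounded_real by auto
  then have z0: "\<phi> t = 0" if "B < \<bar>t\<bar>" for t using that by force
  have z1: "\<phi>' t = 0" if "B < \<bar>t\<bar>" for t
    using has_real_derivative_vanishes_outside[OF d1 z0 that] .
  have z2: "\<phi>'' t = 0" if "B < \<bar>t\<bar>" for t
    using has_real_derivative_vanishes_outside[OF d2 z1 that] .
  define R where "R = \<bar>B\<bar> + \<bar>a\<bar> + 1"
  have R: "B < \<bar>R\<bar>" "B < \<bar>-R\<bar>" "-R \<le> a" "a \<le> R" unfolding R_def by auto
  have "((\<lambda>t. exp (- \<bar>t - a\<bar>) * (\<phi> t - \<phi>'' t)) has_integral (\<phi> a - \<phi>' a) + (\<phi> a + \<phi>' a)) {-R..R}"
    by (intro has_integral_combine[OF R(3,4)] has_integral_exp_neg_abs_Helmholtz_left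
        has_integral_exp_neg_abs_Helmholtz_right d1 d2 z0 z1 R)
  then have "((\<lambda>t. exp (- \<bar>t - a\<bar>) * (\<phi> t - \<phi>'' t)) has_integral 2 * \<phi> a) {-R..R}"
    by simp
  then show ?thesis
    by (rule has_integral_on_superset) (use z0 z2 in \<open>auto simp: R_def\<close>)
qed

lemma has_integral_peakon_u_Helmholtz:
  fixes x m :: "real^'n" and \<phi> \<phi>' \<phi>'' :: "real \<Rightarrow> real"
  assumes "\<And>t. (\<phi> has_real_derivative \<phi>' t) (at t)"
    and "\<And>t. (\<phi>' has_real_derivative \<phi>'' t) (at t)"
    and "bounded {t. \<phi> t \<noteq> 0}"
  shows "((\<lambda>\<xi>. peakon_u x m \<xi> * (\<phi> \<xi> - \<phi>'' \<xi>)) has_integral pair_with_m x m \<phi>) UNIV"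
proof -
  have "((\<lambda>\<xi>. \<Sum>j\<in>UNIV. m$j * (exp (- \<bar>\<xi> - x$j\<bar>) * (\<phi> \<xi> - \<phi>'' \<xi>)))
      has_integral (\<Sum>j\<in>UNIV. m$j * (2 * \<phi> (x$j)))) UNIV"
    by (intro has_integral_sum has_integral_mult_right has_integral_exp_neg_abs_Helmholtz[OF assms]) simp
  moreover have "(\<lambda>\<xi>. \<Sum>j\<in>UNIV. m$j * (exp (- \<bar>\<xi> - x$j\<bar>) * (\<phi> \<xi> - \<phi>'' \<xi>)))
      = (\<lambda>\<xi>. peakon_u x m \<xi> * (\<phi> \<xi> - \<phi>'' \<xi>))"
    by (simp add: fun_eq_iff peakon_u_def sum_distrib_right mult.assoc)
  moreover have "(\<Sum>j\<in>UNIV. m$j * (2 * \<phi> (x$j))) = pair_with_m x m \<phi>"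
    by (simp add: pair_with_m_def mult_ac)
  ultimately show ?thesis by simp
qed

lemma has_integral_exp_to_minus_infinity:
  fixes c d :: real
  assumes "c > 0"
  shows "((\<lambda>x. exp (c * x)) has_integral exp (c * d) / c) {..d}"
proof -
  have "((\<lambda>x. exp (- c * x)) has_integral exp (c * d) / c) {-d..}"
    using has_integral_exp_minus_to_infinity[OF assms, of "-d"] by simp
  then have "(\<lambda>x. exp (c * (- x))) absolutely_integrable_on {-d..}
      \<and> integral {-d..} (\<lambda>x. exp (c * (- x))) = exp (c * d) / c"
    by (auto intro: nonnegative_absolutely_integrable_1 has_integral_integrable simp: integral_unique)
  then have "(\<lambda>x. exp (c * x)) absolutely_integrable_on {..d} \<and> integral {..d} (\<lambda>x. exp (c * x)) = exp (c * d) / c"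
    by (subst (asm) has_absolute_integral_reflect_real) auto
  then show ?thesis
    using absolutely_integrable_on_def has_integral_integral by metis
qed

text \<open>The integrand \<open>e\<^sub>a e\<^sub>b + e\<^sub>a' e\<^sub>b'\<close> of the \<open>H\<^sup>1\<close> product of the peaks
  \<open>e\<^sub>a \<xi> = exp(-|\<xi> - a|)\<close> and \<open>e\<^sub>b\<close>, valid away from \<open>a\<close> and \<open>b\<close>.\<close>

definition peak_energy_density :: "real \<Rightarrow> real \<Rightarrow> real \<Rightarrow> real" where
  "peak_energy_density a b \<xi> =
     exp (- \<bar>\<xi> - a\<bar>) * exp (- \<bar>\<xi> - b\<bar>) + sgn (\<xi> - a) * sgn (\<xi> - b) * (exp (- \<bar>\<xi> - a\<bar>) * exp (- \<bar>\<xi> - b\<bar>))"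

lemma has_integral_peak_energy_density_ordered:
  assumes "a \<le> b"
  shows "(peak_energy_density a b has_integral 2 * exp (- \<bar>a - b\<bar>)) UNIV"
proof -
  define P where "P \<xi> = (if \<xi> \<le> a then 2 * exp (- (a + b)) * exp (2 * \<xi>)
      else if b \<le> \<xi> then 2 * exp (a + b) * exp (- 2 * \<xi>) else 0)" for \<xi>
  have "((\<lambda>\<xi>. 2 * exp (- (a + b)) * exp (2 * \<xi>)) has_integral exp (a - b)) {..a}"
    using has_integral_mult_right[OF has_integral_exp_to_minus_infinity[of 2 a], of "2 * exp (- (a + b))"]
    by (simp add: mult_exp_exp)
  then have left: "(P has_integral exp (a - b)) {..a}"
    by (rule has_integral_eq[rotated]) (auto simp: P_def mult_exp_exp)
  have "((\<lambda>\<xi>. 2 * exp (a + b) * exp (- 2 * \<xi>)) has_integral exp (a - b)) {b..}"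
    using has_integral_mult_right[OF has_integral_exp_minus_to_infinity[of 2 b], of "2 * exp (a + b)"]
    by (simp add: mult_exp_exp)
  then have right: "(P has_integral exp (a - b)) {b..}"
    by (rule has_integral_eq[rotated]) (use assms in \<open>auto simp: P_def mult_exp_exp\<close>)
  have "negligible ({..a} \<inter> {b..})"
    using assms by (intro negligible_subset[OF negligible_sing[of a]]) auto
  with left right have "(P has_integral exp (a - b) + exp (a - b)) ({..a} \<union> {b..})"
    by (rule has_integral_Un)
  then have "(P has_integral 2 * exp (- \<bar>a - b\<bar>)) ({..a} \<union> {b..})"
    using assms by simp
  then have "(P has_integral 2 * exp (- \<bar>a - b\<bar>)) UNIV"
    by (rule has_integral_on_superset) (auto simp: P_def)
  then show ?thesis
  proof (rule has_integral_spike_finite[of "{a, b}", rotated 2])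
    fix \<xi> assume "\<xi> \<in> UNIV - {a, b}"
    then have "\<xi> \<noteq> a" "\<xi> \<noteq> b" by auto
    with assms show "peak_energy_density a b \<xi> = P \<xi>"
      by (auto simp: peak_energy_density_def P_def sgn_if mult_exp_exp abs_if algebra_simps)
  qed simp
qed

lemma has_integral_peak_energy_density:
  "(peak_energy_density a b has_integral 2 * exp (- \<bar>a - b\<bar>)) UNIV"
proof (cases "a \<le> b")
  case False
  then have "(peak_energy_density b a has_integral 2 * exp (- \<bar>b - a\<bar>)) UNIV"
    by (intro has_integral_peak_energy_density_ordered) simp
  moreover have "peak_energy_density b a = peak_energy_density a b"
    by (auto simp: peak_energy_density_def fun_eq_iff)
  ultimately show ?thesis by (simp add: abs_minus_commute)
qed (rule has_integral_peak_energy_density_ordered)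

lemma ham_eq_half_pair_with_m:
  fixes x m :: "real^'n"
  shows "ham x m = 1/2 * pair_with_m x m (peakon_u x m)"
  unfolding ham_def pair_with_m_def peakon_u_def
  by (simp add: sum_distrib_left mult_ac abs_minus_commute)

lemma deriv_peakon_u:
  fixes x m :: "real^'n"
  assumes "\<xi> \<notin> range (\<lambda>i. x$i)"
  shows "deriv (peakon_u x m) \<xi> = (\<Sum>j\<in>UNIV. m$j * (- sgn (\<xi> - x$j) * exp (- \<bar>\<xi> - x$j\<bar>)))"
proof -
  have "peakon_u x m = (\<lambda>\<xi>. \<Sum>j\<in>UNIV. m$j * exp (- \<bar>\<xi> - x$j\<bar>))"
    by (simp add: fun_eq_iff peakon_u_def)
  moreover have "\<xi> \<noteq> x$j" for j using assms by auto
  ultimately have "(peakon_u x m has_real_derivative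
      (\<Sum>j\<in>UNIV. m$j * (- sgn (\<xi> - x$j) * exp (- \<bar>\<xi> - x$j\<bar>)))) (at \<xi>)"
    by (simp only:) (intro DERIV_sum DERIV_cmult has_real_derivative_exp_neg_abs)
  then show ?thesis by (rule DERIV_imp_deriv)
qed

lemma has_integral_peakon_u_H1_norm:
  fixes x m :: "real^'n"
  shows "((\<lambda>\<xi>. (peakon_u x m \<xi>)\<^sup>2 + (deriv (peakon_u x m) \<xi>)\<^sup>2) has_integral 2 * ham x m) UNIV"
proof -
  have "((\<lambda>\<xi>. \<Sum>j\<in>UNIV. \<Sum>k\<in>UNIV. m$j * m$k * peak_energy_density (x$j) (x$k) \<xi>)
      has_integral (\<Sum>j\<in>UNIV. \<Sum>k\<in>UNIV. m$j * m$k * (2 * exp (- \<bar>x$j - x$k\<bar>)))) UNIV"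
    by (intro has_integral_sum has_integral_mult_right has_integral_peak_energy_density) simp_all
  moreover have "(\<Sum>j\<in>UNIV. \<Sum>k\<in>UNIV. m$j * m$k * (2 * exp (- \<bar>x$j - x$k\<bar>))) = 2 * ham x m"
    unfolding ham_def by (simp add: sum_distrib_left mult_ac)
  ultimately have "((\<lambda>\<xi>. \<Sum>j\<in>UNIV. \<Sum>k\<in>UNIV. m$j * m$k * peak_energy_density (x$j) (x$k) \<xi>)
      has_integral 2 * ham x m) UNIV"
    by simp
  then show ?thesis
  proof (rule has_integral_spike_finite[of "range (\<lambda>i. x$i)", rotated 2])
    fix \<xi> assume "\<xi> \<in> UNIV - range (\<lambda>i. x$i)"
    then have \<xi>: "\<xi> \<notin> range (\<lambda>i. x$i)" by simp
    show "(peakon_u x m \<xi>)\<^sup>2 + (deriv (peakon_u x m) \<xi>)\<^sup>2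
        = (\<Sum>j\<in>UNIV. \<Sum>k\<in>UNIV. m$j * m$k * peak_energy_density (x$j) (x$k) \<xi>)"
      unfolding deriv_peakon_u[OF \<xi>] peakon_u_def power2_eq_square sum_product
      by (simp add: sum.distrib[symmetric] peak_energy_density_def algebra_simps)
  qed simp
qed

theorem theorem1:
  fixes x m :: "real^'n"
  assumes distinct: "inj (\<lambda>i. x$i)"
  shows "(\<forall>j. pbracket (\<lambda>x m. x$j) ham x m = mCH_rhs x m j)
       \<and> (\<forall>j. pbracket (\<lambda>x m. m$j) ham x m = 0)
       \<and> (\<forall>\<phi> \<phi>' \<phi>''. (\<forall>\<xi>. (\<phi> has_real_derivative \<phi>' \<xi>) (at \<xi>))
             \<and> (\<forall>\<xi>. (\<phi>' has_real_derivative \<phi>'' \<xi>) (at \<xi>))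
             \<and> continuous_on UNIV \<phi>'' \<and> bounded {\<xi>. \<phi> \<xi> \<noteq> 0}
           \<longrightarrow> ((\<lambda>\<xi>. peakon_u x m \<xi> * (\<phi> \<xi> - \<phi>'' \<xi>)) has_integral pair_with_m x m \<phi>) UNIV)
       \<and> ham x m = 1/2 * pair_with_m x m (peakon_u x m)
       \<and> ((\<lambda>\<xi>. (peakon_u x m \<xi>)\<^sup>2 + (deriv (peakon_u x m) \<xi>)\<^sup>2) has_integral (2 * ham x m)) UNIV"
  using pbracket_position_ham[OF distinct] pbracket_amplitude has_integral_peakon_u_Helmholtz
    ham_eq_half_pair_with_m has_integral_peakon_u_H1_norm
  by blast

end
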